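(* Let $C_{\min}=\min_l C_l$, and run Algorithm 3 (see context) on an arbitrary sequence of packet arrivals. Then: (i) the resulting $\{X_{mk}\}$ is feasible for $\textbf{Schedule}$, i.e. capacities $C_l$ are never exceeded; (ii) the resulting $\{\alpha_m\},\{\beta_{lt}\}$ (final values) are feasible for $\textbf{Dual}$; (iii) there is a constant $B<\infty$, depending on $L$ but not on $C_{\min}$, such that $$\Gamma_{opt}\le\Big(2(1+\ln L)+\frac{B}{C_{\min}}\Big)\sum_{m,k}X_{mk}.$$ Consequently, Algorithm 3 is $(1,\,2(1+\ln L))$-competitive in the limit $C_{\min}\to\infty$.
   Context: Network model. The network is a directed graph with a finite set $\mathcal L$ of links. Each link $l$ has an integer capacity $C_l\ge1$ (packets per time slot). Time is slotted, $t=1,2,\dots$. $\mathcal M$ is a finite set of packets. Packet $m$ has a source node $s_m$, a destination node $\mathrm{dst}_m$, an arrival slot $a_m$ and a deadline slot $f_m$. Valid schedules. A valid schedule for $m$ is a set $k=\{(l_1,t_1),\dots,(l_j,t_j)\}$ of (link, slot) pairs satisfying two conditions: $l_1,\dots,l_j$ form a directed path from $s_m$ to $\mathrm{dst}_m$, and $a_m\le t_1<t_2<\dots<t_j\le f_m$. $V(m)$ denotes the set of valid schedules of $m$. $L\ge1$ is an integer with $|k|\le L$ for all $m\in\mathcal M$, $k\in V(m)$. $\textbf{Schedule}(R)$ is the LP: maximize $\sum_{m,k\in V(m)}X_{mk}$ subject to three constraints: - $\sum_{k\in V(m)}X_{mk}\le1$ for all $m$; - $\sum_{m,k:(l,t)\in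 k}X_{mk}\le RC_l$ for all $l,t$; - $X_{mk}\ge0$. $\textbf{Schedule}$ is $\textbf{Schedule}(1)$, and $\Gamma_{opt}$ denotes its optimal value. $\textbf{Dual}$ is the LP: minimize $\sum_m\alpha_m+\sum_{l,t}C_l\beta_{lt}$ subject to three constraints: - $\alpha_m+\sum_{(l,t)\in k}\beta_{lt}\ge1$ for all $m$ and $k\in V(m)$; - $\alpha_m\ge0$; - $\beta_{lt}\ge0$. Competitive ratio. An online policy $\eta$ is $(R,\rho)$-competitive if $\Gamma_{opt}/\Gamma_\eta(R)\le\rho$ for every arrival sequence, where $\Gamma_\eta(R)$ is the number of packets $\eta$ delivers with capacities $RC_l$. Define the function $$g_L(x)=\begin{cases}\dfrac{e^{x}-1}{L\,(e^{1/(\ln L+1)}-1)}, & 0\le x\le \frac{1}{\ln L+1},\\[2mm] e^{(x-1)(\ln L+1)}, & x\ge\frac{1}{\ln L+1}.\end{cases}$$ Algorithm 3. 1. Initialize all $\alpha_m,X_{mk}$ to $0$. For each link $l$ and slot $t$, let $n_{lt}$ be the number of packets scheduled so far on $(l,t)$ (initially $0$), and maintain $\beta_{lt}=g_L(n_{lt}/C_l)$ (initially $0$). 2. For each arriving packet $m$ in order: - Let $k^*\in\arg\max_{k\in V(m)}\big(1-\sum_{(l,t)\in k}\beta_{lt}\big)$. - If $1-\sum_{(l,t)\in k^*}\beta_{lt}>0$, do the following. Set $\alpha_m=1-\sum_{(l,t)\in k^*}\beta_{lt}$, using current values. For each $(l,t)\in k^*$ increment $n_{lt}$ by one and reset $\beta_{lt}=g_L(n_{lt}/C_l)$.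 Set $X_{mk^*}=1$, and transmit $m$ along $k^*$. - Otherwise, drop $m$. *)

theory Defs
  imports Complex_Main
begin

record net =
  links :: "nat set"
  cap :: "nat \<Rightarrow> nat"
  lk_tail :: "nat \<Rightarrow> nat"
  lk_head :: "nat \<Rightarrow> nat"

record pkts =
  src :: "nat \<Rightarrow> nat"
  dst :: "nat \<Rightarrow> nat"
  arr :: "nat \<Rightarrow> nat"
  dl :: "nat \<Rightarrow> nat"

fun is_walk :: "net \<Rightarrow> nat \<Rightarrow> nat \<Rightarrow> nat list \<Rightarrow> bool" where
  "is_walk N s d [] = (s = d)"
| "is_walk N s d (l # ls) =
     (l \<in> links N \<and> lk_tail N l = s \<and> is_walk N (lk_head N l) d ls)"

definition is_path :: "net \<Rightarrow> nat \<Rightarrow> nat \<Rightarrow> nat list \<Rightarrow> bool" where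
  "is_path N s d ls \<longleftrightarrow> is_walk N s d ls \<and> distinct (s # map (lk_head N) ls)"

definition V :: "net \<Rightarrow> pkts \<Rightarrow> nat \<Rightarrow> (nat \<times> nat) set set" where
  "V N P m = {k. \<exists>ps. set ps = k \<and> is_path N (src P m) (dst P m) (map fst ps)
                  \<and> sorted_wrt (<) (map snd ps)
                  \<and> (\<forall>p\<in>set ps. arr P m \<le> snd p \<and> snd p \<le> dl P m)}"

text \<open>LP Schedule(R) over the packet set M; X(m,k) is the LP variable X_{mk}
  (variables outside m \<in> M, k \<in> V(m) are forced to be 0).\<close>

definition sched_feasible ::
  "net \<Rightarrow> pkts \<Rightarrow> nat set \<Rightarrow> real \<Rightarrow> (nat \<times> (nat \<times> nat) set \<Rightarrow> real) \<Rightarrow> bool" where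
  "sched_feasible N P M R X \<longleftrightarrow>
     (\<forall>m k. X (m, k) \<noteq> 0 \<longrightarrow> m \<in> M \<and> k \<in> V N P m) \<and>
     (\<forall>m k. 0 \<le> X (m, k)) \<and>
     (\<forall>m\<in>M. (\<Sum>k\<in>V N P m. X (m, k)) \<le> 1) \<and>
     (\<forall>l\<in>links N. \<forall>t. (\<Sum>m\<in>M. \<Sum>k\<in>{k \<in> V N P m. (l, t) \<in> k}. X (m, k))
                          \<le> R * real (cap N l))"

definition sched_obj :: "net \<Rightarrow> pkts \<Rightarrow> nat set \<Rightarrow> (nat \<times> (nat \<times> nat) set \<Rightarrow> real) \<Rightarrow> real" where
  "sched_obj N P M X = (\<Sum>m\<in>M. \<Sum>k\<in>V N P m. X (m, k))"

definition Gamma_opt :: "net \<Rightarrow> pkts \<Rightarrow> nat set \<Rightarrow> real" where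
  "Gamma_opt N P M = Sup (sched_obj N P M ` {X. sched_feasible N P M 1 X})"

definition dual_feasible ::
  "net \<Rightarrow> pkts \<Rightarrow> nat set \<Rightarrow> (nat \<Rightarrow> real) \<Rightarrow> (nat \<Rightarrow> nat \<Rightarrow> real) \<Rightarrow> bool" where
  "dual_feasible N P M \<alpha> \<beta> \<longleftrightarrow>
     (\<forall>m\<in>M. \<forall>k\<in>V N P m. 1 \<le> \<alpha> m + (\<Sum>(l, t)\<in>k. \<beta> l t)) \<and>
     (\<forall>m\<in>M. 0 \<le> \<alpha> m) \<and>
     (\<forall>l\<in>links N. \<forall>t. 0 \<le> \<beta> l t)"

definition gL :: "nat \<Rightarrow> real \<Rightarrow> real" where
  "gL L x = (if x \<le> 1 / (ln (real L) + 1)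
             then (exp x - 1) / (real L * (exp (1 / (ln (real L) + 1)) - 1))
             else exp ((x - 1) * (ln (real L) + 1)))"

definition beta_of :: "net \<Rightarrow> nat \<Rightarrow> (nat \<Rightarrow> nat \<Rightarrow> nat) \<Rightarrow> nat \<Rightarrow> nat \<Rightarrow> real" where
  "beta_of N L n l t = gL L (real (n l t) / real (cap N l))"

definition price :: "net \<Rightarrow> nat \<Rightarrow> (nat \<Rightarrow> nat \<Rightarrow> nat) \<Rightarrow> (nat \<times> nat) set \<Rightarrow> real" where
  "price N L n k = (\<Sum>(l, t)\<in>k. beta_of N L n l t)"

text \<open>Algorithm 3, as a relation: alg3 N P L ms n alpha X holds iff processing the
  packets ms in order (with arbitrary tie-breaking in the argmax) can end in the
  state where n are the counters n_lt, alpha the dual variables alpha_m and X the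
  primal variables X_mk; the final beta_lt is beta_of N L n l t.\<close>

inductive alg3 :: "net \<Rightarrow> pkts \<Rightarrow> nat \<Rightarrow> nat list \<Rightarrow> (nat \<Rightarrow> nat \<Rightarrow> nat) \<Rightarrow> (nat \<Rightarrow> real)
                   \<Rightarrow> (nat \<times> (nat \<times> nat) set \<Rightarrow> real) \<Rightarrow> bool"
  for N :: net and P :: pkts and L :: nat where
  init: "alg3 N P L [] (\<lambda>_ _. 0) (\<lambda>_. 0) (\<lambda>_. 0)"
| accept: "\<lbrakk> alg3 N P L ms n \<alpha> X; k \<in> V N P m;
             \<forall>k'\<in>V N P m. 1 - price N L n k' \<le> 1 - price N L n k;
             1 - price N L n k > 0 \<rbrakk>
           \<Longrightarrow> alg3 N P L (ms @ [m]) (\<lambda>l t. if (l, t) \<in> k then Suc (n l t) else n l t)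
                 (\<alpha>(m := 1 - price N L n k)) (X((m, k) := 1))"
| drop: "\<lbrakk> alg3 N P L ms n \<alpha> X; \<forall>k\<in>V N P m. 1 - price N L n k \<le> 0 \<rbrakk>
           \<Longrightarrow> alg3 N P L (ms @ [m]) n \<alpha> X"

definition Cmin :: "net \<Rightarrow> nat" where
  "Cmin N = Min (cap N ` links N)"

end

theory Submission
  imports Defs
begin

text \<open>Algorithm 3 is a primal-dual scheme.  A link slot that already carries \<open>C\<^sub>l\<close>
  packets has \<open>\<beta> = g\<^sub>L(1) \<ge> 1\<close>, so no packet is routed through it any more, which keeps
  \<open>X\<close> feasible.  Every packet is either routed or dropped with price at least 1 on all its
  schedules, and prices only grow, so \<open>(\<alpha>, \<beta>)\<close> stays dual feasible.  When a packet is
  accepted along a schedule of price \<open>p < 1\<close>, the dual objective grows by \<open>1 - p\<close> plus the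
  increase of \<open>\<Sum> C\<^sub>l \<beta>\<^sub>l\<^sub>t\<close>; a second-order Taylor bound for \<open>g\<^sub>L\<close> (whose slope is
  \<open>a = 1 + ln L\<close> times \<open>g\<^sub>L + 1/L\<close>) bounds the latter by \<open>a p + a + L K / C\<^sub>m\<^sub>i\<^sub>n\<close>.
  Since \<open>1 - p + a p \<le> a\<close>, each accepted packet raises the dual objective by at most
  \<open>2 a + L K / C\<^sub>m\<^sub>i\<^sub>n\<close>, and weak duality bounds \<open>\<Gamma>\<^sub>o\<^sub>p\<^sub>t\<close> by the dual objective.\<close>

lemma exp_minus_one_le:
  fixes y :: real
  assumes "0 \<le> y"
  shows "exp y - 1 \<le> y + y\<^sup>2 * exp y"
proof -
  have "1 - y \<le> exp (-y)" using exp_ge_add_one_self[of "-y"] by simp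
  then have "exp y * (1 - y) \<le> exp y * exp (-y)" by (simp add: mult_left_mono)
  then have first_order: "exp y - 1 \<le> y * exp y" by (simp add: exp_minus algebra_simps)
  then have "y * (exp y - 1) \<le> y * (y * exp y)" using assms by (simp add: mult_left_mono)
  then show ?thesis using first_order by (simp add: power2_eq_square algebra_simps)
qed

definition gL_rate :: "nat \<Rightarrow> real" where
  "gL_rate L = 1 + ln (real L)"

definition gL_knee :: "nat \<Rightarrow> real" where
  "gL_knee L = 1 / gL_rate L"

definition gL_scale :: "nat \<Rightarrow> real" where
  "gL_scale L = 1 / (real L * (exp (gL_knee L) - 1))"

definition gL_curvature :: "nat \<Rightarrow> real" where
  "gL_curvature L = gL_rate L ^ 2 + gL_rate L * exp 1"

context
  fixes L :: nat
  assumes L_pos: "1 \<le> L"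
begin

lemma gL_rate_ge_1: "1 \<le> gL_rate L"
  using L_pos by (simp add: gL_rate_def)

lemma gL_knee_pos: "0 < gL_knee L"
  using gL_rate_ge_1 by (simp add: gL_knee_def)

lemma gL_knee_le_1: "gL_knee L \<le> 1"
  using gL_rate_ge_1 by (simp add: gL_knee_def)

lemma gL_curvature_nonneg: "0 \<le> gL_curvature L"
  using gL_rate_ge_1 by (simp add: gL_curvature_def)

lemma gL_scale_pos: "0 < gL_scale L"
proof -
  have "gL_knee L \<le> exp (gL_knee L) - 1" using exp_ge_add_one_self[of "gL_knee L"] by linarith
  then show ?thesis using gL_knee_pos L_pos by (simp add: gL_scale_def)
qed

lemma gL_scale_le: "gL_scale L \<le> gL_rate L / real L"
proof -
  have L: "0 < real L" using L_pos by simp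
  have "gL_knee L \<le> exp (gL_knee L) - 1" using exp_ge_add_one_self[of "gL_knee L"] by linarith
  then have "real L * gL_knee L \<le> real L * (exp (gL_knee L) - 1)" using L by simp
  then have "1 / (real L * (exp (gL_knee L) - 1)) \<le> 1 / (real L * gL_knee L)"
    using L gL_knee_pos by (intro divide_left_mono) auto
  also have "1 / (real L * gL_knee L) = gL_rate L / real L"
    using gL_rate_ge_1 by (simp add: gL_knee_def)
  finally show ?thesis by (simp add: gL_scale_def)
qed

lemma gL_below_knee: "x \<le> gL_knee L \<Longrightarrow> gL L x = gL_scale L * (exp x - 1)"
  by (simp add: gL_def gL_scale_def gL_knee_def gL_rate_def add.commute)

lemma gL_at_knee: "gL L (gL_knee L) = 1 / real L"
proof -
  have "exp (gL_knee L) - 1 \<noteq> 0" using gL_knee_pos by simp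
  then show ?thesis using L_pos by (simp add: gL_below_knee gL_scale_def)
qed

text \<open>Both branches of \<open>g\<^sub>L\<close> take the value \<open>1 / L\<close> at the knee, so the exponential
  branch may be used from the knee on.\<close>

lemma gL_above_knee: "gL_knee L \<le> x \<Longrightarrow> gL L x = exp ((x - 1) * gL_rate L)"
proof (cases "x = gL_knee L")
  case True
  then have "gL L x = 1 / real L" using gL_at_knee by simp
  moreover have "(x - 1) * gL_rate L = - ln (real L)"
    using True gL_rate_ge_1 by (simp add: gL_knee_def gL_rate_def algebra_simps)
  ultimately show ?thesis using L_pos by (simp add: exp_minus inverse_eq_divide)
qed (simp add: gL_def gL_knee_def gL_rate_def add.commute)

lemma gL_zero: "gL L 0 = 0"
  using gL_below_knee gL_knee_pos by simp

lemma gL_nonneg: "0 \<le> x \<Longrightarrow> 0 \<le> gL L x"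
  using gL_below_knee[of x] gL_above_knee[of x] gL_scale_pos by fastforce

lemma gL_mono:
  assumes "0 \<le> x" "x \<le> y"
  shows "gL L x \<le> gL L y"
proof (cases "x \<le> gL_knee L")
  case below: True
  show ?thesis
  proof (cases "y \<le> gL_knee L")
    case True
    then show ?thesis using below assms gL_scale_pos by (simp add: gL_below_knee)
  next
    case False
    have "gL L x \<le> gL L (gL_knee L)" using below gL_scale_pos by (simp add: gL_below_knee)
    also have "\<dots> \<le> gL L y"
      using False gL_rate_ge_1 by (simp add: gL_above_knee mult_right_mono)
    finally show ?thesis .
  qed
next
  case False
  then show ?thesis using assms gL_rate_ge_1 by (simp add: gL_above_knee mult_right_mono)
qed

lemma gL_ge_1: "1 \<le> x \<Longrightarrow> 1 \<le> gL L x"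
  using gL_above_knee[of x] gL_knee_le_1 gL_rate_ge_1 by simp

lemma gL_increment_below_knee:
  assumes x: "0 \<le> x" and h: "0 \<le> h" and xh: "x + h \<le> gL_knee L"
  shows "gL L (x + h) - gL L x
         \<le> h * (gL_rate L * gL L x + gL_rate L / real L) + h\<^sup>2 * (gL_rate L * exp 1)"
proof -
  define a c where "a = gL_rate L" and "c = gL_scale L"
  have a: "1 \<le> a" and c: "0 < c" "c \<le> a / real L"
    using gL_rate_ge_1 gL_scale_pos gL_scale_le by (auto simp: a_def c_def)
  have g: "gL L x = c * (exp x - 1)" "gL L (x + h) = c * (exp (x + h) - 1)"
    using xh h by (simp_all add: gL_below_knee c_def)
  have "gL L (x + h) - gL L x = c * exp x * (exp h - 1)"
    unfolding g by (simp add: exp_add algebra_simps)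
  also have "\<dots> \<le> c * exp x * (h + h\<^sup>2 * exp h)"
    using exp_minus_one_le[OF h] c by (intro mult_left_mono) auto
  also have "\<dots> = h * gL L x + h * c + h\<^sup>2 * (c * exp (x + h))"
    unfolding g by (simp add: exp_add algebra_simps)
  also have "\<dots> \<le> h * (a * gL L x) + h * (a / real L) + h\<^sup>2 * (a * exp 1)"
  proof -
    have "h * gL L x \<le> h * (a * gL L x)"
      using gL_nonneg[OF x] a h by (intro mult_left_mono) (auto simp: mult_le_cancel_right1)
    moreover have "h * c \<le> h * (a / real L)" using c h by (intro mult_left_mono) auto
    moreover have "c * exp (x + h) \<le> a * exp 1"
    proof -
      have "a / real L \<le> a" using a L_pos by (simp add: divide_le_eq)
      then have "c \<le> a" using c by linarith
      moreover have "exp (x + h) \<le> exp 1" using xh gL_knee_le_1 by simp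
      ultimately show ?thesis using c by (intro mult_mono) auto
    qed
    then have "h\<^sup>2 * (c * exp (x + h)) \<le> h\<^sup>2 * (a * exp 1)" by (intro mult_left_mono) auto
    ultimately show ?thesis by linarith
  qed
  finally show ?thesis by (simp add: a_def distrib_left)
qed

lemma gL_increment_above_knee:
  assumes x: "gL_knee L \<le> x" and h: "0 \<le> h" and xh: "x + h \<le> 1"
  shows "gL L (x + h) - gL L x \<le> h * (gL_rate L * gL L x) + h\<^sup>2 * gL_rate L ^ 2"
proof -
  define a where "a = gL_rate L"
  have a: "1 \<le> a" using gL_rate_ge_1 by (simp add: a_def)
  have g: "gL L x = exp ((x - 1) * a)" "gL L (x + h) = exp ((x + h - 1) * a)"
    using x h by (simp_all add: gL_above_knee a_def)
  have ah: "0 \<le> a * h" using a h by simp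
  have "gL L (x + h) - gL L x = gL L x * (exp (a * h) - 1)"
    unfolding g by (simp add: exp_add[symmetric] algebra_simps)
  also have "\<dots> \<le> gL L x * (a * h + (a * h)\<^sup>2 * exp (a * h))"
    using exp_minus_one_le[OF ah] by (intro mult_left_mono) (auto simp: g)
  also have "\<dots> = h * (a * gL L x) + h\<^sup>2 * a\<^sup>2 * gL L (x + h)"
    unfolding g by (simp add: power_mult_distrib exp_add[symmetric] algebra_simps)
  also have "\<dots> \<le> h * (a * gL L x) + h\<^sup>2 * a\<^sup>2"
  proof -
    have "gL L (x + h) \<le> 1" using xh a by (simp add: g mult_nonpos_nonneg)
    then show ?thesis by (simp add: mult_left_le)
  qed
  finally show ?thesis by (simp add: a_def)
qed

lemma gL_increment:
  assumes x: "0 \<le> x" and h: "0 \<le> h" and xh: "x + h \<le> 1"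
  shows "gL L (x + h) - gL L x
         \<le> h * (gL_rate L * gL L x + gL_rate L / real L) + h\<^sup>2 * gL_curvature L"
proof -
  define a k where "a = gL_rate L" and "k = gL_knee L"
  have a: "1 \<le> a" and g0: "0 \<le> gL L x" and aL: "0 \<le> a / real L"
    using gL_rate_ge_1 gL_nonneg[OF x] by (auto simp: a_def)
  have h2: "h\<^sup>2 * (a * exp 1) \<le> h\<^sup>2 * gL_curvature L" "h\<^sup>2 * a\<^sup>2 \<le> h\<^sup>2 * gL_curvature L"
    using a by (simp_all add: gL_curvature_def a_def mult_left_mono)
  consider "x + h \<le> k" | "k \<le> x" | "x < k" "k < x + h" by linarith
  then show ?thesis
  proof cases
    case 1
    then show ?thesis using gL_increment_below_knee[OF x h] h2(1) by (simp add: a_def k_def)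
  next
    case 2
    have "h * (a * gL L x) \<le> h * (a * gL L x + a / real L)" using h aL by (simp add: mult_left_mono)
    then show ?thesis using gL_increment_above_knee[OF _ h xh] 2 h2(2) by (simp add: a_def k_def)
  next
    case 3
    define h1 h2 where "h1 = k - x" and "h2 = x + h - k"
    have h12: "0 \<le> h1" "0 \<le> h2" "h = h1 + h2" using 3 by (simp_all add: h1_def h2_def)
    have ends: "k + h2 = x + h" "x + h1 = k" by (simp_all add: h1_def h2_def)
    have "gL L (k + h2) - gL L k \<le> h2 * (a * gL L k) + h2\<^sup>2 * a\<^sup>2"
      using gL_increment_above_knee[of k h2] h12(2) xh ends(1) unfolding a_def k_def by simp
    moreover have "h2 * (a * gL L k) \<le> h2 * (a * gL L x + a / real L)"
      using gL_at_knee g0 a h12(2) by (intro mult_left_mono) (auto simp: k_def)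
    ultimately have up: "gL L (x + h) - gL L k \<le> h2 * (a * gL L x + a / real L) + h2\<^sup>2 * a\<^sup>2"
      using ends(1) by simp
    have low: "gL L k - gL L x \<le> h1 * (a * gL L x + a / real L) + h1\<^sup>2 * (a * exp 1)"
      using gL_increment_below_knee[OF x h12(1)] ends(2) unfolding a_def k_def by simp
    have "h1\<^sup>2 + h2\<^sup>2 \<le> h\<^sup>2" using h12 by (simp add: power2_sum)
    then have "(h1\<^sup>2 + h2\<^sup>2) * (a\<^sup>2 + a * exp 1) \<le> h\<^sup>2 * gL_curvature L"
      unfolding gL_curvature_def a_def[symmetric] using a by (intro mult_right_mono) auto
    moreover have "h1\<^sup>2 * (a * exp 1) + h2\<^sup>2 * a\<^sup>2 \<le> (h1\<^sup>2 + h2\<^sup>2) * (a\<^sup>2 + a * exp 1)"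
      using a by (simp add: distrib_left distrib_right)
    moreover have "h1 * (a * gL L x + a / real L) + h2 * (a * gL L x + a / real L)
        = h * (a * gL L x + a / real L)"
      using h12(3) by (simp add: distrib_right)
    ultimately show ?thesis using up low unfolding a_def by linarith
  qed
qed

lemma gL_unit_increment:
  fixes n c :: nat
  assumes "n < c"
  shows "real c * (gL L (real (Suc n) / real c) - gL L (real n / real c))
         \<le> gL_rate L * gL L (real n / real c) + gL_rate L / real L + gL_curvature L / real c"
proof -
  have c: "0 < real c" using assms by simp
  have "real n / real c + 1 / real c \<le> 1"
    using assms c by (simp add: add_divide_distrib[symmetric] divide_le_eq)
  moreover have "real (Suc n) / real c = real n / real c + 1 / real c"
    by (simp add: add_divide_distrib)
  ultimately have "gL L (real (Suc n) / real c) - gL L (real n / real c)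
        \<le> 1 / real c * (gL_rate L * gL L (real n / real c) + gL_rate L / real L)
          + (1 / real c)\<^sup>2 * gL_curvature L"
    using gL_increment[of "real n / real c" "1 / real c"] by simp
  from mult_left_mono[OF this, of "real c"] c show ?thesis
    by (simp add: distrib_left power2_eq_square)
qed

end

lemma is_walk_links: "is_walk N s d ls \<Longrightarrow> set ls \<subseteq> links N"
  by (induction ls arbitrary: s) auto

lemma V_subset: "k \<in> V N P m \<Longrightarrow> k \<subseteq> links N \<times> {arr P m..dl P m}"
proof
  fix p assume k: "k \<in> V N P m" and p: "p \<in> k"
  then obtain ps where ps: "set ps = k" "is_path N (src P m) (dst P m) (map fst ps)"
     "\<forall>p\<in>set ps. arr P m \<le> snd p \<and> snd p \<le> dl P m"
    unfolding V_def by blast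
  have "fst ` set ps \<subseteq> links N" using ps(2) is_walk_links unfolding is_path_def by fastforce
  then show "p \<in> links N \<times> {arr P m..dl P m}" using p ps(1,3) by (cases p) force
qed

lemma finite_V: "finite (links N) \<Longrightarrow> finite (V N P m)"
  by (rule finite_subset[of _ "Pow (links N \<times> {arr P m..dl P m})"]) (auto dest: V_subset)

lemma finite_schedule: "k \<in> V N P m \<Longrightarrow> finite k"
  unfolding V_def by auto

lemma alg3_X_values:
  "alg3 N P L ms n \<alpha> X \<Longrightarrow> X (q, k) = 0 \<or> (X (q, k) = 1 \<and> q \<in> set ms \<and> k \<in> V N P q)"
  by (induction rule: alg3.induct) auto

lemma alg3_X_fresh: "alg3 N P L ms n \<alpha> X \<Longrightarrow> q \<notin> set ms \<Longrightarrow> X (q, k) = 0"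
  using alg3_X_values by blast

lemma alg3_alpha_fresh: "alg3 N P L ms n \<alpha> X \<Longrightarrow> q \<notin> set ms \<Longrightarrow> \<alpha> q = 0"
  by (induction rule: alg3.induct) auto

lemma sum_fun_upd_fresh_row:
  assumes "\<And>k'. X (m, k') = (0::real)" and "finite A"
  shows "(\<Sum>k'\<in>A. (X((m, k) := 1)) (m, k')) = (if k \<in> A then 1 else 0)"
proof -
  have "(\<Sum>k'\<in>A. (X((m, k) := 1)) (m, k')) = (\<Sum>k'\<in>A. if k' = k then 1 else 0)"
    using assms(1) by (intro sum.cong) auto
  then show ?thesis using assms(2) by simp
qed

lemma sched_obj_fun_upd_fresh:
  assumes "finite M" "m \<notin> M" "\<And>k'. X (m, k') = 0" "finite (V N P m)" "k \<in> V N P m"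
  shows "sched_obj N P (insert m M) (X((m, k) := 1)) = 1 + sched_obj N P M X"
proof -
  have "sched_obj N P M (X((m, k) := 1)) = sched_obj N P M X"
    unfolding sched_obj_def using assms(2) by (intro sum.cong) auto
  then show ?thesis
    using assms sum_fun_upd_fresh_row[of X m "V N P m" k] by (simp add: sched_obj_def)
qed

lemma alg3_row_sum_le_1:
  assumes "alg3 N P L ms n \<alpha> X" "distinct ms" "finite (links N)"
  shows "(\<Sum>k\<in>V N P q. X (q, k)) \<le> 1"
  using assms
proof (induction rule: alg3.induct)
  case (accept ms n \<alpha> X k m)
  have "\<And>k'. X (m, k') = 0" using alg3_X_fresh accept by simp
  then show ?case
    using accept sum_fun_upd_fresh_row[of X m "V N P m" k] finite_V by (cases "q = m") auto
qed simp_all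

lemma alg3_count_eq_load:
  assumes "alg3 N P L ms n \<alpha> X" "distinct ms" "finite (links N)"
  shows "real (n l t) = (\<Sum>q\<in>set ms. \<Sum>k\<in>{k \<in> V N P q. (l, t) \<in> k}. X (q, k))"
  using assms
proof (induction rule: alg3.induct)
  case (accept ms n \<alpha> X k m)
  have m: "m \<notin> set ms" using accept.prems by simp
  have "(\<Sum>q\<in>set ms. \<Sum>k'\<in>{k' \<in> V N P q. (l, t) \<in> k'}. (X((m, k) := 1)) (q, k'))
      = (\<Sum>q\<in>set ms. \<Sum>k'\<in>{k' \<in> V N P q. (l, t) \<in> k'}. X (q, k'))"
    using m by (intro sum.cong) auto
  moreover have "(\<Sum>k'\<in>{k' \<in> V N P m. (l, t) \<in> k'}. (X((m, k) := 1)) (m, k'))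
      = (if (l, t) \<in> k then 1 else 0)"
    using sum_fun_upd_fresh_row[of X m _ k] alg3_X_fresh[OF accept.hyps(1) m]
      finite_V[OF accept.prems(2)] accept.hyps(2) by simp
  ultimately show ?case using accept m by simp
next
  case (drop ms n \<alpha> X m)
  then show ?case using alg3_X_fresh[OF drop.hyps(1)] by simp
qed simp

lemma beta_of_nonneg: "1 \<le> L \<Longrightarrow> 0 \<le> beta_of N L n l t"
  unfolding beta_of_def by (rule gL_nonneg) auto

lemma beta_of_le_price:
  "1 \<le> L \<Longrightarrow> finite k \<Longrightarrow> (l, t) \<in> k \<Longrightarrow> beta_of N L n l t \<le> price N L n k"
  unfolding price_def
  using member_le_sum[of "(l, t)" k "\<lambda>(l, t). beta_of N L n l t"] by (auto simp: beta_of_nonneg)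

lemma price_mono: "1 \<le> L \<Longrightarrow> (\<And>l t. n l t \<le> n' l t) \<Longrightarrow> price N L n k \<le> price N L n' k"
  unfolding price_def beta_of_def by (intro sum_mono) (auto intro!: gL_mono divide_right_mono)

lemma count_lt_cap_of_price_lt_1:
  assumes "1 \<le> L" "k \<in> V N P m" "price N L n k < 1" "(l, t) \<in> k" "1 \<le> cap N l"
  shows "n l t < cap N l"
proof (rule ccontr)
  assume "\<not> n l t < cap N l"
  then have "1 \<le> real (n l t) / real (cap N l)" using assms(5) by simp
  then have "1 \<le> beta_of N L n l t" unfolding beta_of_def by (rule gL_ge_1[OF assms(1)])
  also have "\<dots> \<le> price N L n k"
    using beta_of_le_price[OF assms(1) finite_schedule[OF assms(2)] assms(4)] .
  finally show False using assms(3) by simp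
qed

lemma alg3_count_le_cap:
  assumes "alg3 N P L ms n \<alpha> X" "1 \<le> L" "\<forall>l\<in>links N. 1 \<le> cap N l" "l \<in> links N"
  shows "n l t \<le> cap N l"
  using assms
proof (induction rule: alg3.induct)
  case (accept ms n \<alpha> X k m)
  then show ?case
    using count_lt_cap_of_price_lt_1[OF accept.prems(1) accept.hyps(2), of n l t] by auto
qed simp_all

lemma alg3_dual_constraints:
  assumes "alg3 N P L ms n \<alpha> X" "1 \<le> L" "distinct ms" "q \<in> set ms"
  shows "0 \<le> \<alpha> q \<and> (\<forall>k\<in>V N P q. 1 \<le> \<alpha> q + price N L n k)"
  using assms
proof (induction arbitrary: q rule: alg3.induct)
  case (accept ms n \<alpha> X k m)
  have raised: "price N L n k' \<le> price N L (\<lambda>l t. if (l, t) \<in> k then Suc (n l t) else n l t) k'"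
    for k'
    using price_mono[OF accept.prems(1)] by simp
  show ?case
  proof (cases "q = m")
    case True
    then show ?thesis using accept.hyps(3,4) raised by (auto intro: order_trans)
  next
    case False
    then have "0 \<le> \<alpha> q \<and> (\<forall>k\<in>V N P q. 1 \<le> \<alpha> q + price N L n k)"
      using accept.IH accept.prems by simp
    then show ?thesis using False raised by (fastforce intro: order_trans add_left_mono)
  qed
next
  case (drop ms n \<alpha> X m)
  show ?case
  proof (cases "q = m")
    case True
    then show ?thesis using drop alg3_alpha_fresh[OF drop.hyps(1)] by auto
  next
    case False
    then show ?thesis using drop by simp
  qed
qed simp

lemma alg3_sched_feasible:
  assumes A: "alg3 N P L ms n \<alpha> X" and L: "1 \<le> L" and ms: "distinct ms"
    and fin: "finite (links N)" and caps: "\<forall>l\<in>links N. 1 \<le> cap N l"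
  shows "sched_feasible N P (set ms) 1 X"
proof -
  have "(\<Sum>m\<in>set ms. \<Sum>k\<in>{k \<in> V N P m. (l, t) \<in> k}. X (m, k)) \<le> real (cap N l)"
    if "l \<in> links N" for l t
    using alg3_count_eq_load[OF A ms fin, of l t] alg3_count_le_cap[OF A L caps that, of t] by simp
  moreover have "0 \<le> X (m, k)" "X (m, k) \<noteq> 0 \<longrightarrow> m \<in> set ms \<and> k \<in> V N P m" for m k
    using alg3_X_values[OF A, of m k] by auto
  ultimately show ?thesis
    unfolding sched_feasible_def using alg3_row_sum_le_1[OF A ms fin] by auto
qed

lemma alg3_dual_feasible:
  assumes "alg3 N P L ms n \<alpha> X" "1 \<le> L" "distinct ms"
  shows "dual_feasible N P (set ms) \<alpha> (beta_of N L n)"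
  using alg3_dual_constraints[OF assms] beta_of_nonneg[OF assms(2)]
  unfolding dual_feasible_def price_def by auto

definition dual_link_cost :: "net \<Rightarrow> (nat \<Rightarrow> nat \<Rightarrow> real) \<Rightarrow> (nat \<times> nat) set \<Rightarrow> real" where
  "dual_link_cost N \<beta> S = (\<Sum>(l, t)\<in>S. real (cap N l) * \<beta> l t)"

lemma dual_link_cost_increment_le:
  fixes c :: nat
  assumes L: "1 \<le> L" and k: "k \<in> V N P m" and p: "price N L n k < 1" and card: "card k \<le> L"
    and c: "0 < c" "\<forall>l\<in>links N. c \<le> cap N l" and S: "finite S" "k \<subseteq> S"
  shows "dual_link_cost N (beta_of N L (\<lambda>l t. if (l, t) \<in> k then Suc (n l t) else n l t)) S
         \<le> dual_link_cost N (beta_of N L n) S + gL_rate L * price N L n k + gL_rate L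
           + real L * gL_curvature L / real c"
proof -
  define n' where "n' = (\<lambda>l t. if (l, t) \<in> k then Suc (n l t) else n l t)"
  define a K where "a = gL_rate L" and "K = gL_curvature L"
  define \<delta> where "\<delta> = (\<lambda>(l, t). real (cap N l) * (beta_of N L n' l t - beta_of N L n l t))"
  have "dual_link_cost N (beta_of N L n') S = dual_link_cost N (beta_of N L n) S + sum \<delta> S"
    by (simp add: dual_link_cost_def \<delta>_def case_prod_unfold right_diff_distrib sum_subtractf)
  also have "sum \<delta> S = sum \<delta> k"
    using S by (intro sum.mono_neutral_right) (auto simp: \<delta>_def n'_def beta_of_def)
  also have "sum \<delta> k \<le> (\<Sum>(l, t)\<in>k. a * beta_of N L n l t + (a / real L + K / real c))"
  proof (intro sum_mono)
    fix x assume x: "x \<in> k"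
    obtain l t where x_eq: "x = (l, t)" by (cases x)
    have cl: "c \<le> cap N l" using V_subset[OF k] x x_eq c(2) by auto
    have "n l t < cap N l"
      using count_lt_cap_of_price_lt_1[OF L k p] x x_eq cl c(1) by simp
    from gL_unit_increment[OF L this]
    have "\<delta> x \<le> a * beta_of N L n l t + a / real L + K / real (cap N l)"
      using x x_eq by (simp add: \<delta>_def n'_def beta_of_def a_def K_def)
    moreover have "K / real (cap N l) \<le> K / real c"
      using gL_curvature_nonneg[OF L] cl c(1) by (simp add: K_def divide_left_mono)
    ultimately show "\<delta> x \<le> (case x of (l, t) \<Rightarrow> a * beta_of N L n l t + (a / real L + K / real c))"
      using x_eq by simp
  qed
  also have "\<dots> = a * price N L n k + real (card k) * (a / real L + K / real c)"
    by (simp add: sum.distrib sum_distrib_left price_def case_prod_unfold)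
  also have "real (card k) * (a / real L + K / real c) \<le> real L * (a / real L + K / real c)"
    using card gL_rate_ge_1[OF L] gL_curvature_nonneg[OF L] by (intro mult_right_mono) (auto simp: a_def K_def)
  also have "real L * (a / real L + K / real c) = a + real L * K / real c"
    using L by (simp add: distrib_left)
  finally show ?thesis by (simp add: n'_def a_def K_def add.assoc)
qed

lemma alg3_dual_objective_le:
  fixes c :: nat
  assumes "alg3 N P L ms n \<alpha> X" "1 \<le> L" "distinct ms" "finite (links N)"
    and "0 < c" "\<forall>l\<in>links N. c \<le> cap N l" "\<forall>q\<in>set ms. \<forall>k\<in>V N P q. card k \<le> L"
    and "finite S" "\<forall>q\<in>set ms. \<forall>k\<in>V N P q. k \<subseteq> S"
  shows "sum \<alpha> (set ms) + dual_link_cost N (beta_of N L n) S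
         \<le> (2 * gL_rate L + real L * gL_curvature L / real c) * sched_obj N P (set ms) X"
  using assms
proof (induction rule: alg3.induct)
  case init
  then show ?case by (simp add: dual_link_cost_def beta_of_def gL_zero sched_obj_def)
next
  case (accept ms n \<alpha> X k m)
  define a p R where "a = gL_rate L" and "p = price N L n k"
    and "R = 2 * gL_rate L + real L * gL_curvature L / real c"
  have m: "m \<notin> set ms" using accept.prems by simp
  have X_m: "\<And>k'. X (m, k') = 0" using alg3_X_fresh[OF accept.hyps(1) m] .
  have "sum (\<alpha>(m := 1 - p)) (set ms) = sum \<alpha> (set ms)"
    using m by (intro sum.cong) auto
  then have alpha: "sum (\<alpha>(m := 1 - p)) (set (ms @ [m])) = (1 - p) + sum \<alpha> (set ms)"
    using m by simp
  have obj: "sched_obj N P (set (ms @ [m])) (X((m, k) := 1)) = 1 + sched_obj N P (set ms) X"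
    using sched_obj_fun_upd_fresh[of "set ms" m X N P k] m X_m finite_V[OF accept.prems(3)] accept.hyps(2)
    by simp
  have link: "dual_link_cost N (beta_of N L (\<lambda>l t. if (l, t) \<in> k then Suc (n l t) else n l t)) S
      \<le> dual_link_cost N (beta_of N L n) S + a * p + a + real L * gL_curvature L / real c"
    using dual_link_cost_increment_le[OF accept.prems(1) accept.hyps(2), of n] accept.hyps(2,4) accept.prems
    by (simp add: a_def p_def)
  have IH: "sum \<alpha> (set ms) + dual_link_cost N (beta_of N L n) S \<le> R * sched_obj N P (set ms) X"
    using accept.IH accept.prems by (simp add: R_def)
  have "1 - p + a * p \<le> a"
  proof -
    have "0 \<le> (a - 1) * (1 - p)" using gL_rate_ge_1[OF accept.prems(1)] accept.hyps(4)
      by (simp add: a_def p_def)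
    then show ?thesis by (simp add: algebra_simps)
  qed
  then have "(1 - p) + sum \<alpha> (set ms)
      + dual_link_cost N (beta_of N L (\<lambda>l t. if (l, t) \<in> k then Suc (n l t) else n l t)) S
      \<le> R * (1 + sched_obj N P (set ms) X)"
    using link IH by (simp add: R_def a_def distrib_left)
  then show ?case unfolding p_def[symmetric] R_def[symmetric] alpha obj .
next
  case (drop ms n \<alpha> X m)
  then have "m \<notin> set ms" by simp
  then show ?case
    using drop alg3_alpha_fresh[OF drop.hyps(1)] alg3_X_fresh[OF drop.hyps(1)]
    by (simp add: sched_obj_def)
qed

lemma sum_members_swap:
  assumes "finite A" "finite S" "\<And>k. k \<in> A \<Longrightarrow> k \<subseteq> S"
  shows "(\<Sum>k\<in>A. \<Sum>p\<in>k. f k p) = (\<Sum>p\<in>S. \<Sum>k\<in>{k \<in> A. p \<in> k}. f k p)"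
proof -
  have "(\<Sum>k\<in>A. \<Sum>p\<in>k. f k p) = (\<Sum>k\<in>A. \<Sum>p\<in>{p \<in> S. p \<in> k}. f k p)"
  proof (rule sum.cong[OF refl])
    fix k assume "k \<in> A"
    then have "{p \<in> S. p \<in> k} = k" using assms(3) by blast
    then show "(\<Sum>p\<in>k. f k p) = (\<Sum>p\<in>{p \<in> S. p \<in> k}. f k p)" by simp
  qed
  also have "\<dots> = (\<Sum>p\<in>S. \<Sum>k\<in>{k \<in> A. p \<in> k}. f k p)"
    by (rule sum.swap_restrict[OF assms(1,2)])
  finally show ?thesis .
qed

lemma sched_obj_le_dual_objective:
  assumes Y: "sched_feasible N P M 1 Y" and D: "dual_feasible N P M \<alpha> \<beta>"
    and fin: "finite M" "finite S" "\<forall>m\<in>M. finite (V N P m)"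
    and S: "\<forall>m\<in>M. \<forall>k\<in>V N P m. k \<subseteq> S" "S \<subseteq> links N \<times> UNIV"
  shows "sched_obj N P M Y \<le> sum \<alpha> M + dual_link_cost N \<beta> S"
proof -
  define b where "b = (\<lambda>(l, t). \<beta> l t)"
  have Y0: "0 \<le> Y (m, k)" for m k using Y by (simp add: sched_feasible_def)
  have b0: "0 \<le> b p" if "p \<in> S" for p using D S(2) that by (auto simp: dual_feasible_def b_def)
  have "Y (m, k) \<le> Y (m, k) * (\<alpha> m + sum b k)" if "m \<in> M" "k \<in> V N P m" for m k
    using mult_left_mono[of 1 "\<alpha> m + sum b k" "Y (m, k)"] D Y0 that
    by (simp add: dual_feasible_def b_def case_prod_unfold)
  then have "sched_obj N P M Y \<le> (\<Sum>m\<in>M. \<Sum>k\<in>V N P m. Y (m, k) * (\<alpha> m + sum b k))"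
    unfolding sched_obj_def by (intro sum_mono) auto
  also have "\<dots> = (\<Sum>m\<in>M. \<alpha> m * (\<Sum>k\<in>V N P m. Y (m, k)))
      + (\<Sum>m\<in>M. \<Sum>k\<in>V N P m. \<Sum>p\<in>k. Y (m, k) * b p)"
    by (simp add: distrib_left sum.distrib sum_distrib_left sum_distrib_right mult_ac)
  also have "(\<Sum>m\<in>M. \<alpha> m * (\<Sum>k\<in>V N P m. Y (m, k))) \<le> sum \<alpha> M"
    using Y D by (intro sum_mono) (auto simp: sched_feasible_def dual_feasible_def mult_left_le)
  also have "(\<Sum>m\<in>M. \<Sum>k\<in>V N P m. \<Sum>p\<in>k. Y (m, k) * b p)
      = (\<Sum>m\<in>M. \<Sum>p\<in>S. \<Sum>k\<in>{k \<in> V N P m. p \<in> k}. Y (m, k) * b p)"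
    using fin S(1) by (intro sum.cong refl sum_members_swap) auto
  also have "\<dots> = (\<Sum>p\<in>S. b p * (\<Sum>m\<in>M. \<Sum>k\<in>{k \<in> V N P m. p \<in> k}. Y (m, k)))"
    by (subst sum.swap) (simp add: sum_distrib_left mult.commute)
  also have "\<dots> \<le> (\<Sum>p\<in>S. b p * real (cap N (fst p)))"
    using Y S(2) b0 by (intro sum_mono mult_left_mono) (auto simp: sched_feasible_def)
  also have "\<dots> = dual_link_cost N \<beta> S"
    by (simp add: dual_link_cost_def b_def case_prod_unfold mult.commute)
  finally show ?thesis by simp
qed

lemma Gamma_opt_le_dual_objective:
  assumes "dual_feasible N P M \<alpha> \<beta>" "finite M" "finite S" "\<forall>m\<in>M. finite (V N P m)"
    and "\<forall>m\<in>M. \<forall>k\<in>V N P m. k \<subseteq> S" "S \<subseteq> links N \<times> UNIV"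
  shows "Gamma_opt N P M \<le> sum \<alpha> M + dual_link_cost N \<beta> S"
  unfolding Gamma_opt_def
proof (rule cSup_least)
  have "sched_feasible N P M 1 (\<lambda>_. 0)" by (simp add: sched_feasible_def)
  then show "sched_obj N P M ` {X. sched_feasible N P M 1 X} \<noteq> {}" by blast
qed (use sched_obj_le_dual_objective assms in blast)

lemma Cmin_le_cap: "finite (links N) \<Longrightarrow> l \<in> links N \<Longrightarrow> Cmin N \<le> cap N l"
  unfolding Cmin_def by simp

lemma Cmin_pos:
  assumes "finite (links N)" "links N \<noteq> {}" "\<forall>l\<in>links N. 1 \<le> cap N l"
  shows "0 < Cmin N"
proof -
  have "Cmin N \<in> cap N ` links N" unfolding Cmin_def using assms(1,2) by (intro Min_in) auto
  then show ?thesis using assms(3) by auto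
qed

theorem theorem3:
  fixes L :: nat
  assumes "1 \<le> L"
  shows "\<exists>B::real. \<forall>(N::net) (P::pkts) (ms::nat list) n \<alpha> X.
           finite (links N) \<and> links N \<noteq> {} \<and> (\<forall>l\<in>links N. 1 \<le> cap N l) \<and>
           distinct ms \<and> sorted (map (arr P) ms) \<and> (\<forall>m\<in>set ms. 1 \<le> arr P m) \<and>
           (\<forall>m\<in>set ms. \<forall>k\<in>V N P m. card k \<le> L) \<and>
           alg3 N P L ms n \<alpha> X
           \<longrightarrow> sched_feasible N P (set ms) 1 X \<and>
               dual_feasible N P (set ms) \<alpha> (beta_of N L n) \<and>
               Gamma_opt N P (set ms)
                 \<le> (2 * (1 + ln (real L)) + B / real (Cmin N)) * sched_obj N P (set ms) X"
proof (intro exI[of _ "real L * gL_curvature L"] allI impI, elim conjE)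
  fix N P ms n \<alpha> X
  \<comment> \<open>the order and positivity of the arrival slots play no role in the argument\<close>
  assume fin: "finite (links N)" and ne: "links N \<noteq> {}" and caps: "\<forall>l\<in>links N. 1 \<le> cap N l"
    and ms: "distinct ms" and card: "\<forall>m\<in>set ms. \<forall>k\<in>V N P m. card k \<le> L"
    and A: "alg3 N P L ms n \<alpha> X"
  define S where "S = (\<Union>q\<in>set ms. \<Union>(V N P q))"
  have S: "finite S" "\<forall>q\<in>set ms. \<forall>k\<in>V N P q. k \<subseteq> S" "S \<subseteq> links N \<times> UNIV"
    unfolding S_def using finite_V[OF fin] finite_schedule V_subset by (blast, blast, blast)
  have dual: "dual_feasible N P (set ms) \<alpha> (beta_of N L n)"
    using alg3_dual_feasible[OF A assms ms] .
  have "Gamma_opt N P (set ms) \<le> sum \<alpha> (set ms) + dual_link_cost N (beta_of N L n) S"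
    using Gamma_opt_le_dual_objective[OF dual _ S(1)] S(2,3) finite_V[OF fin] by simp
  also have "\<dots> \<le> (2 * (1 + ln (real L)) + real L * gL_curvature L / real (Cmin N))
                    * sched_obj N P (set ms) X"
    using alg3_dual_objective_le[OF A assms ms fin Cmin_pos[OF fin ne caps] _ card S(1,2)]
      Cmin_le_cap[OF fin] unfolding gL_rate_def by simp
  finally show "sched_feasible N P (set ms) 1 X \<and> dual_feasible N P (set ms) \<alpha> (beta_of N L n) \<and>
      Gamma_opt N P (set ms)
        \<le> (2 * (1 + ln (real L)) + real L * gL_curvature L / real (Cmin N)) * sched_obj N P (set ms) X"
    using alg3_sched_feasible[OF A assms ms fin caps] dual by blast
qed

end
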